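(* Let $m,n\ge1$. There is no smooth function $u$ on all of $S^m\times S^n$ for which the hypersurface $\vec X(S^m\times S^n)\subset S^{m+n+1}$, where $\vec X(\vec\gamma,\vec\rho)=(1+e^{-2u})^{-1/2}\vec\gamma+(1+e^{2u})^{-1/2}\vec\rho$, is strictly convex.
   Context: $S^m\subset\mathbb R^{m+1}$, $S^n\subset\mathbb R^{n+1}$, $S^{m+n+1}\subset\mathbb R^{m+1}\oplus\mathbb R^{n+1}$ are unit spheres, $\vec\gamma,\vec\rho$ the position vectors of $S^m,S^n$. A hypersurface of $S^{m+n+1}$ is strictly convex if its second fundamental form (as a hypersurface of $S^{m+n+1}$) is positive or negative definite. *)

theory Defs
  imports "HOL-Analysis.Analysis"
begin

fun dirderivs :: "'a::real_normed_vector list \<Rightarrow> ('a \<Rightarrow> 'b::real_normed_vector) \<Rightarrow> 'a \<Rightarrow> 'b" where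
  "dirderivs [] f = f"
| "dirderivs (v # vs) f = (\<lambda>x. vector_derivative (\<lambda>t. dirderivs vs f (x + t *\<^sub>R v)) (at 0))"

definition smooth_on :: "'a::euclidean_space set \<Rightarrow> ('a \<Rightarrow> 'b::real_normed_vector) \<Rightarrow> bool" where
  "smooth_on U f \<longleftrightarrow> open U \<and>
     (\<forall>vs. \<forall>x\<in>U. continuous (at x) (dirderivs vs f) \<and>
        (\<forall>v. (\<lambda>t. dirderivs vs f (x + t *\<^sub>R v)) differentiable (at 0)))"

definition smooth_on_set :: "'a::euclidean_space set \<Rightarrow> ('a \<Rightarrow> 'b::real_normed_vector) \<Rightarrow> bool" where
  "smooth_on_set S f \<longleftrightarrow> (\<exists>U g. S \<subseteq> U \<and> smooth_on U g \<and> (\<forall>x\<in>S. g x = f x))"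

definition sphere_prod :: "('a::euclidean_space \<times> 'b::euclidean_space) set" where
  "sphere_prod = sphere 0 1 \<times> sphere 0 1"

definition Xmap :: "('a::real_normed_vector \<times> 'b::real_normed_vector \<Rightarrow> real) \<Rightarrow> 'a \<times> 'b \<Rightarrow> 'a \<times> 'b" where
  "Xmap u p = ((1 + exp (-2 * u p)) powr (-1/2) *\<^sub>R fst p, (1 + exp (2 * u p)) powr (-1/2) *\<^sub>R snd p)"

definition smooth_curve_through :: "'a::euclidean_space set \<Rightarrow> 'a \<Rightarrow> (real \<Rightarrow> 'a) \<Rightarrow> bool" where
  "smooth_curve_through S p c \<longleftrightarrow> c 0 = p \<and>
     (\<exists>e>0. smooth_on {-e<..<e} c \<and> (\<forall>t\<in>{-e<..<e}. c t \<in> S))"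

text \<open>Strict convexity of the immersed hypersurface F(M) of the unit sphere of the ambient space:
  at every point p of M there is a unit normal nu of F(M) tangent to the sphere
  (nu orthogonal to F p and to dF_p(T_p M)) with respect to which the second fundamental form
  h_p(v,v) = < (F o c)''(0), nu >  (c any smooth curve in M with c(0)=p, c'(0)=v)
  is positive definite.  (Negative definiteness w.r.t. nu is positive definiteness w.r.t. -nu.)\<close>
definition strictly_convex_hypersurface :: "'a::euclidean_space set \<Rightarrow> ('a \<Rightarrow> 'a) \<Rightarrow> bool" where
  "strictly_convex_hypersurface M F \<longleftrightarrow>
     (\<forall>p\<in>M. \<exists>\<nu>. norm \<nu> = 1 \<and> \<nu> \<bullet> F p = 0 \<and>
        (\<forall>c. smooth_curve_through M p c \<longrightarrow> \<nu> \<bullet> vector_derivative (F \<circ> c) (at 0) = 0) \<and>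
        (\<forall>c. smooth_curve_through M p c \<and> vector_derivative c (at 0) \<noteq> 0 \<longrightarrow>
           \<nu> \<bullet> vector_derivative (\<lambda>t. vector_derivative (F \<circ> c) (at t)) (at 0) > 0))"

end

theory Submission
  imports Defs
begin

text \<open>Fix a point \<open>(\<gamma>, \<rho>)\<close> of \<open>S^m \<times> S^n\<close> and a normal \<open>\<nu>\<close> for which the second fundamental
  form is positive definite, and put \<open>P = (1 + exp (-2u))^(-1/2)\<close>, \<open>Q = (1 + exp (2u))^(-1/2)\<close>
  (so \<open>P^2 + Q^2 = 1\<close>) and \<open>k = P \<nu>\<bullet>\<rho> - Q \<nu>\<bullet>\<gamma>\<close>. If \<open>w\<close> is \<open>u\<close> along a great circle of the first
  factor, the second fundamental form in the direction of that circle is \<open>k P Q (1 - w'' + w'^2)\<close>;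
  along a great circle of the second factor it is \<open>-k P Q (1 + w'' + w'^2)\<close>. So the two quantities
  \<open>1 - w'' + w'^2\<close> and \<open>1 + w'' + w'^2\<close> have opposite signs at every point. At a maximum of \<open>u\<close>
  on a circle of the first factor the first one is positive, so the second one is negative on the
  circle of the second factor through that point; but it is positive at a minimum of \<open>u\<close> on that
  circle, so by the intermediate value theorem it vanishes somewhere, which is impossible.\<close>

lemma real_linearization_bound:
  fixes \<phi> \<phi>' :: "real \<Rightarrow> real"
  assumes "\<And>t. t \<in> closed_segment 0 c \<Longrightarrow> (\<phi> has_real_derivative \<phi>' t) (at t)"
    and "\<And>t. t \<in> closed_segment 0 c \<Longrightarrow> \<bar>\<phi>' t - K\<bar> \<le> \<epsilon>"
  shows "\<bar>\<phi> c - \<phi> 0 - c * K\<bar> \<le> \<epsilon> * \<bar>c\<bar>"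
proof -
  have "norm ((\<phi> c - K * c) - (\<phi> 0 - K * 0)) \<le> \<epsilon> * norm (c - 0)"
  proof (rule field_differentiable_bound[where f="\<lambda>t. \<phi> t - K * t" and S="closed_segment 0 c"])
    fix t assume "t \<in> closed_segment 0 c"
    then have "((\<lambda>t. \<phi> t - K * t) has_real_derivative \<phi>' t - K * 1) (at t)"
      using assms(1) by (intro DERIV_diff DERIV_cmult DERIV_ident)
    then show "((\<lambda>t. \<phi> t - K * t) has_field_derivative \<phi>' t - K) (at t within closed_segment 0 c)"
      by (simp add: has_field_derivative_at_within)
    show "norm (\<phi>' t - K) \<le> \<epsilon>"
      using assms(2) \<open>t \<in> closed_segment 0 c\<close> by simp
  qed auto
  then show ?thesis
    by (simp add: algebra_simps)
qed

lemma periodic_shift_int: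
  assumes "\<And>s. f (s + p) = f s"
  shows "f (s + of_int k * p) = f s"
proof (induction k rule: int_induct[where k=0])
  case (step1 i)
  then show ?case using assms[of "s + of_int i * p"] by (simp add: algebra_simps)
next
  case (step2 i)
  then show ?case using assms[of "s + of_int (i - 1) * p"] by (simp add: algebra_simps)
qed simp

lemma periodic_attains_max:
  fixes f :: "real \<Rightarrow> real"
  assumes "\<And>s. isCont f s" "\<And>s. f (s + p) = f s" "p > 0"
  obtains x where "\<And>y. f y \<le> f x"
proof -
  have "continuous_on {0..p} f"
    using assms(1) by (simp add: continuous_at_imp_continuous_on)
  then obtain x where x: "\<forall>z\<in>{0..p}. f z \<le> f x"
    using continuous_attains_sup[of "{0..p}" f] assms(3) by auto
  have "f y \<le> f x" for y
  proof -
    define k where "k = \<lfloor>y / p\<rfloor>"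
    have "of_int k * p \<le> y" "y \<le> (of_int k + 1) * p"
      using assms(3) floor_divide_lower[of p y] floor_divide_upper[of p y] by (simp_all add: k_def)
    then have "y - of_int k * p \<in> {0..p}"
      by (simp add: algebra_simps)
    then show ?thesis
      using x[rule_format] periodic_shift_int[of f p "y - of_int k * p" k, OF assms(2)] by simp
  qed
  then show thesis by (rule that)
qed

lemma global_max_second_derivative:
  fixes f :: "real \<Rightarrow> real"
  assumes f': "\<And>y. (f has_real_derivative f' y) (at y)" and f'': "(f' has_real_derivative l) (at x)"
    and max: "\<And>y. f y \<le> f x"
  shows "f' x = 0" "l \<le> 0"
proof -
  show "f' x = 0"
    using DERIV_local_max[OF f' zero_less_one] max by blast
  show "l \<le> 0"
  proof (rule ccontr)
    assume "\<not> l \<le> 0"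
    then obtain e where "e > 0" and e: "\<And>h. 0 < h \<Longrightarrow> h < e \<Longrightarrow> f' x < f' (x + h)"
      using DERIV_pos_inc_right[OF f''] by force
    have "f x < f (x + e)"
    proof (rule DERIV_pos_imp_increasing_open[of x "x + e" f])
      fix z assume "x < z" "z < x + e"
      then show "\<exists>y. (f has_real_derivative y) (at z) \<and> 0 < y"
        using f' e[of "z - x"] \<open>f' x = 0\<close> by auto
    next
      show "continuous_on {x..x + e} f"
        using f' by (meson DERIV_continuous continuous_at_imp_continuous_on)
    qed (use \<open>e > 0\<close> in simp)
    then show False using max[of "x + e"] by simp
  qed
qed

lemma periodic_max_second_derivative:
  fixes f :: "real \<Rightarrow> real"
  assumes f': "\<And>x. (f has_real_derivative f' x) (at x)" and f'': "\<And>x. (f' has_real_derivative f'' x) (at x)"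
    and "\<And>x. f (x + p) = f x" "p > 0"
  obtains x where "f' x = 0" "f'' x \<le> 0"
proof -
  obtain x where "\<And>y. f y \<le> f x"
    using periodic_attains_max[of f p] DERIV_isCont[OF f'] assms(3,4) by blast
  then show thesis
    using global_max_second_derivative[OF f' f''] that by blast
qed

lemma periodic_min_second_derivative:
  fixes f :: "real \<Rightarrow> real"
  assumes "\<And>x. (f has_real_derivative f' x) (at x)" "\<And>x. (f' has_real_derivative f'' x) (at x)"
    and "\<And>x. f (x + p) = f x" "p > 0"
  obtains x where "f' x = 0" "f'' x \<ge> 0"
proof -
  have "\<And>x. ((\<lambda>x. - f x) has_real_derivative - f' x) (at x)"
    "\<And>x. ((\<lambda>x. - f' x) has_real_derivative - f'' x) (at x)"
    using assms(1,2) by (auto intro: derivative_intros)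
  from periodic_max_second_derivative[OF this] assms(3,4) that show thesis
    by force
qed

lemma partial_sum_segment_in_ball:
  fixes h :: "'a::euclidean_space"
  assumes h: "(\<Sum>b\<in>Basis. \<bar>h \<bullet> b\<bar>) < r" and "insert b B \<subseteq> Basis" "b \<notin> B"
    and t: "t \<in> closed_segment 0 (h \<bullet> b)"
  shows "x + (\<Sum>b\<in>B. (h \<bullet> b) *\<^sub>R b) + t *\<^sub>R b \<in> ball x r"
proof -
  have "\<bar>t\<bar> \<le> \<bar>h \<bullet> b\<bar>"
    using t by (auto simp: closed_segment_eq_real_ivl split: if_splits)
  moreover have "norm (\<Sum>b\<in>B. (h \<bullet> b) *\<^sub>R b) \<le> (\<Sum>b\<in>B. norm ((h \<bullet> b) *\<^sub>R b))"
    by (rule norm_sum)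
  moreover have "(\<Sum>b\<in>B. norm ((h \<bullet> b) *\<^sub>R b)) = (\<Sum>b\<in>B. \<bar>h \<bullet> b\<bar>)"
    using assms(2) by (intro sum.cong) (auto simp: norm_Basis)
  moreover have "(\<Sum>b\<in>B. \<bar>h \<bullet> b\<bar>) + \<bar>h \<bullet> b\<bar> \<le> (\<Sum>b\<in>Basis. \<bar>h \<bullet> b\<bar>)"
    using sum_mono2[OF finite_Basis assms(2), of "\<lambda>b. \<bar>h \<bullet> b\<bar>"] assms(3)
      finite_subset[OF assms(2) finite_Basis] by (simp add: add.commute)
  ultimately have "norm ((\<Sum>b\<in>B. (h \<bullet> b) *\<^sub>R b) + t *\<^sub>R b) < r"
    using norm_triangle_ineq[of "\<Sum>b\<in>B. (h \<bullet> b) *\<^sub>R b" "t *\<^sub>R b"] h assms(2)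
    by (simp add: norm_Basis)
  then show ?thesis
    by (metis add.assoc add_diff_cancel_left' dist_norm dist_commute mem_ball)
qed

lemma partial_sum_linearization_bound:
  fixes f :: "'a::euclidean_space \<Rightarrow> real"
  assumes D: "\<And>y b. y \<in> ball x r \<Longrightarrow> b \<in> Basis \<Longrightarrow>
      ((\<lambda>t. f (y + t *\<^sub>R b)) has_real_derivative D b y) (at 0)"
    and close: "\<And>y b. y \<in> ball x r \<Longrightarrow> b \<in> Basis \<Longrightarrow> \<bar>D b y - D b x\<bar> \<le> \<epsilon>"
    and h: "(\<Sum>b\<in>Basis. \<bar>h \<bullet> b\<bar>) < r"
    and B: "B \<subseteq> Basis"
  shows "\<bar>f (x + (\<Sum>b\<in>B. (h \<bullet> b) *\<^sub>R b)) - f x - (\<Sum>b\<in>B. (h \<bullet> b) * D b x)\<bar>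
      \<le> \<epsilon> * (\<Sum>b\<in>B. \<bar>h \<bullet> b\<bar>)"
  using finite_subset[OF B finite_Basis] B
proof (induction B rule: finite_subset_induct')
  case empty
  then show ?case by simp
next
  case (insert b B)
  define q where "q = x + (\<Sum>b\<in>B. (h \<bullet> b) *\<^sub>R b)"
  have in_ball: "q + t *\<^sub>R b \<in> ball x r" if "t \<in> closed_segment 0 (h \<bullet> b)" for t
    unfolding q_def using partial_sum_segment_in_ball[OF h _ insert.hyps(4) that] insert.hyps(2,3)
    by blast
  have "((\<lambda>s. f (q + s *\<^sub>R b)) has_real_derivative D b (q + t *\<^sub>R b)) (at t)"
    if "t \<in> closed_segment 0 (h \<bullet> b)" for t
  proof -
    have "((\<lambda>s. f ((q + t *\<^sub>R b) + s *\<^sub>R b)) has_real_derivative D b (q + t *\<^sub>R b)) (at 0)"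
      using D in_ball[OF that] insert.hyps(2) by blast
    then show ?thesis
      using DERIV_shift[of "\<lambda>s. f (q + s *\<^sub>R b)" _ 0 t] by (simp add: algebra_simps scaleR_add_left)
  qed
  then have step: "\<bar>f (q + (h \<bullet> b) *\<^sub>R b) - f (q + 0 *\<^sub>R b) - (h \<bullet> b) * D b x\<bar> \<le> \<epsilon> * \<bar>h \<bullet> b\<bar>"
    by (rule real_linearization_bound) (use close[OF in_ball insert.hyps(2)] in auto)
  have "x + (\<Sum>b\<in>insert b B. (h \<bullet> b) *\<^sub>R b) = q + (h \<bullet> b) *\<^sub>R b"
    using insert.hyps by (simp add: q_def algebra_simps)
  moreover have "(\<Sum>b\<in>insert b B. (h \<bullet> b) * D b x) = (h \<bullet> b) * D b x + (\<Sum>b\<in>B. (h \<bullet> b) * D b x)"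
    and "(\<Sum>b\<in>insert b B. \<bar>h \<bullet> b\<bar>) = \<bar>h \<bullet> b\<bar> + (\<Sum>b\<in>B. \<bar>h \<bullet> b\<bar>)"
    using insert.hyps by simp_all
  ultimately show ?case
    using insert.IH step unfolding q_def[symmetric] by (simp add: abs_le_iff algebra_simps)
qed

lemma continuous_partials_close:
  fixes D :: "'a::euclidean_space \<Rightarrow> 'a \<Rightarrow> real"
  assumes "open U" "x \<in> U" "\<epsilon> > 0" and cont: "\<And>b. b \<in> Basis \<Longrightarrow> continuous (at x) (D b)"
  obtains r where "r > 0" "ball x r \<subseteq> U"
    and "\<And>y b. y \<in> ball x r \<Longrightarrow> b \<in> Basis \<Longrightarrow> \<bar>D b y - D b x\<bar> \<le> \<epsilon>"
proof -
  have "\<forall>\<^sub>F y in nhds x. \<forall>b\<in>Basis. dist (D b y) (D b x) < \<epsilon>"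
  proof (rule eventually_ball_finite[OF finite_Basis], intro ballI)
    fix b :: 'a assume "b \<in> Basis"
    then have "(D b \<longlongrightarrow> D b x) (nhds x)"
      using cont by (simp add: continuous_at tendsto_at_iff_tendsto_nhds)
    then show "\<forall>\<^sub>F y in nhds x. dist (D b y) (D b x) < \<epsilon>" using \<open>\<epsilon> > 0\<close> by (rule tendstoD)
  qed
  then obtain \<delta> where "\<delta> > 0" and \<delta>: "\<And>y. dist y x < \<delta> \<Longrightarrow> \<forall>b\<in>Basis. dist (D b y) (D b x) < \<epsilon>"
    unfolding eventually_nhds_metric by blast
  obtain r0 where "r0 > 0" "ball x r0 \<subseteq> U"
    using assms(1,2) open_contains_ball by blast
  show thesis
  proof (rule that[of "min r0 \<delta>"])
    show "min r0 \<delta> > 0" "ball x (min r0 \<delta>) \<subseteq> U"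
      using \<open>r0 > 0\<close> \<open>\<delta> > 0\<close> \<open>ball x r0 \<subseteq> U\<close> by auto
    show "\<bar>D b y - D b x\<bar> \<le> \<epsilon>" if "y \<in> ball x (min r0 \<delta>)" "b \<in> Basis" for y b
      using \<delta>[of y] that by (auto simp: dist_real_def dist_commute)
  qed
qed

lemma has_derivative_continuous_partials:
  fixes f :: "'a::euclidean_space \<Rightarrow> real"
  assumes "open U" "x \<in> U"
    and D: "\<And>y b. y \<in> U \<Longrightarrow> b \<in> Basis \<Longrightarrow>
      ((\<lambda>t. f (y + t *\<^sub>R b)) has_real_derivative D b y) (at 0)"
    and cont: "\<And>b. b \<in> Basis \<Longrightarrow> continuous (at x) (D b)"
  shows "(f has_derivative (\<lambda>h. \<Sum>b\<in>Basis. (h \<bullet> b) * D b x)) (at x)"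
  unfolding has_derivative_at_alt
proof (intro conjI allI impI)
  show "bounded_linear (\<lambda>h. \<Sum>b\<in>Basis. (h \<bullet> b) * D b x)"
    by (intro bounded_linear_intros)
  fix e :: real assume "e > 0"
  define n where "n = real DIM('a)"
  have n: "n \<ge> 1" unfolding n_def using DIM_positive by (simp add: Suc_le_eq)
  define \<epsilon> where "\<epsilon> = e / n"
  have "\<epsilon> > 0" using \<open>e > 0\<close> n by (simp add: \<epsilon>_def)
  obtain r where r: "r > 0" "ball x r \<subseteq> U"
    and close: "\<And>y b. y \<in> ball x r \<Longrightarrow> b \<in> Basis \<Longrightarrow> \<bar>D b y - D b x\<bar> \<le> \<epsilon>"
    using continuous_partials_close[where D=D, OF assms(1,2) \<open>\<epsilon> > 0\<close> cont] by blast
  show "\<exists>d>0. \<forall>y. norm (y - x) < d \<longrightarrow>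
      norm (f y - f x - (\<Sum>b\<in>Basis. ((y - x) \<bullet> b) * D b x)) \<le> e * norm (y - x)"
  proof (intro exI[of _ "r / n"] conjI allI impI)
    show "r / n > 0" using r n by simp
    fix y assume y: "norm (y - x) < r / n"
    define h where "h = y - x"
    have sum_le: "(\<Sum>b\<in>Basis. \<bar>h \<bullet> b\<bar>) \<le> n * norm h"
      using sum_bounded_above[of Basis "\<lambda>b. \<bar>h \<bullet> b\<bar>" "norm h"] Basis_le_norm
      by (auto simp: n_def)
    also have "\<dots> < r" using y n by (simp add: h_def field_simps)
    finally have "\<bar>f (x + (\<Sum>b\<in>Basis. (h \<bullet> b) *\<^sub>R b)) - f x - (\<Sum>b\<in>Basis. (h \<bullet> b) * D b x)\<bar>
        \<le> \<epsilon> * (\<Sum>b\<in>Basis. \<bar>h \<bullet> b\<bar>)"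
      using r D close by (intro partial_sum_linearization_bound) auto
    also have "\<dots> \<le> e * norm h"
      using mult_left_mono[OF sum_le, of \<epsilon>] \<open>\<epsilon> > 0\<close> n by (simp add: \<epsilon>_def)
    finally show "norm (f y - f x - (\<Sum>b\<in>Basis. ((y - x) \<bullet> b) * D b x)) \<le> e * norm (y - x)"
      by (simp add: euclidean_representation h_def)
  qed
qed

lemma smooth_on_has_derivative:
  fixes g :: "'a::euclidean_space \<Rightarrow> real"
  assumes "smooth_on U g" "y \<in> U"
  shows "(dirderivs vs g has_derivative (\<lambda>h. \<Sum>b\<in>Basis. (h \<bullet> b) * dirderivs (b # vs) g y)) (at y)"
proof (rule has_derivative_continuous_partials)
  show "open U" using assms(1) by (simp add: smooth_on_def)
  fix z b assume "z \<in> U"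
  then have "(\<lambda>t. dirderivs vs g (z + t *\<^sub>R b)) differentiable (at 0)"
    using assms(1) by (simp add: smooth_on_def)
  then show "((\<lambda>t. dirderivs vs g (z + t *\<^sub>R b)) has_real_derivative dirderivs (b # vs) g z) (at 0)"
    by (simp add: vector_derivative_works has_real_derivative_iff_has_vector_derivative)
next
  fix b :: 'a
  show "continuous (at y) (dirderivs (b # vs) g)"
    using assms unfolding smooth_on_def by blast
qed (use assms in auto)

lemma smooth_on_has_real_derivative_along:
  fixes g :: "'a::euclidean_space \<Rightarrow> real"
  assumes "smooth_on U g" "c s \<in> U" "(c has_vector_derivative v) (at s)"
  shows "((\<lambda>s. dirderivs vs g (c s)) has_real_derivative
      (\<Sum>b\<in>Basis. (v \<bullet> b) * dirderivs (b # vs) g (c s))) (at s)"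
proof -
  have "((\<lambda>s. dirderivs vs g (c s)) has_derivative
      (\<lambda>t. \<Sum>b\<in>Basis. ((t *\<^sub>R v) \<bullet> b) * dirderivs (b # vs) g (c s))) (at s)"
    using has_derivative_compose[OF assms(3)[unfolded has_vector_derivative_def]
        smooth_on_has_derivative[OF assms(1,2)]] .
  moreover have "(\<lambda>t. \<Sum>b\<in>Basis. ((t *\<^sub>R v) \<bullet> b) * dirderivs (b # vs) g (c s))
      = (*) (\<Sum>b\<in>Basis. (v \<bullet> b) * dirderivs (b # vs) g (c s))"
    by (auto simp: fun_eq_iff sum_distrib_left algebra_simps)
  ultimately show ?thesis by (simp add: has_field_derivative_def)
qed

lemma smooth_on_compose_C2_curve:
  fixes g :: "'a::euclidean_space \<Rightarrow> real"
  assumes g: "smooth_on U g" and U: "\<And>s. c s \<in> U"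
    and c': "\<And>s. (c has_vector_derivative c' s) (at s)"
    and c'': "\<And>s. (c' has_vector_derivative c'' s) (at s)"
    and cont: "\<And>s. isCont c'' s"
  obtains D D2 where "\<And>s. ((\<lambda>s. g (c s)) has_real_derivative D s) (at s)"
    and "\<And>s. (D has_real_derivative D2 s) (at s)" and "\<And>s. isCont D2 s"
proof
  define D where "D s = (\<Sum>b\<in>Basis. (c' s \<bullet> b) * dirderivs [b] g (c s))" for s
  define D2 where "D2 s = (\<Sum>b\<in>Basis. (c'' s \<bullet> b) * dirderivs [b] g (c s)
      + (\<Sum>b'\<in>Basis. (c' s \<bullet> b') * dirderivs [b', b] g (c s)) * (c' s \<bullet> b))" for s
  show "((\<lambda>s. g (c s)) has_real_derivative D s) (at s)" for s
    using smooth_on_has_real_derivative_along[OF g U[of s] c'[of s], where vs="[]"] by (simp add: D_def)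
  have inner_deriv: "((\<lambda>s. c' s \<bullet> b) has_real_derivative c'' s \<bullet> b) (at s)" for s b
    using has_derivative_inner_left[OF c''[of s, unfolded has_vector_derivative_def], of b]
    by (simp add: has_field_derivative_def mult.commute[of _ "c'' s \<bullet> b"] fun_eq_iff)
  show "(D has_real_derivative D2 s) (at s)" for s
    unfolding D_def D2_def
    by (intro DERIV_sum DERIV_mult inner_deriv smooth_on_has_real_derivative_along[OF g U[of s] c'[of s]])
  have cont_c: "isCont c s" "isCont c' s" for s
    using c' c'' has_vector_derivative_continuous by blast+
  have cont_g: "isCont (\<lambda>s. dirderivs vs g (c s)) s" for vs s
    using g U by (intro isCont_o2[OF cont_c(1)]) (auto simp: smooth_on_def)
  show "isCont D2 s" for s
    unfolding D2_def by (intro continuous_intros cont_c cont cont_g)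
qed

definition circle_deriv :: "'a::real_normed_vector \<Rightarrow> 'a \<Rightarrow> 'a \<Rightarrow> nat \<Rightarrow> real \<Rightarrow> 'a" where
  "circle_deriv A B C k x =
     cos (x + real k * pi / 2) *\<^sub>R A + sin (x + real k * pi / 2) *\<^sub>R B + (if k = 0 then C else 0)"

lemma circle_deriv_0: "circle_deriv A B C 0 = (\<lambda>x. cos x *\<^sub>R A + sin x *\<^sub>R B + C)"
  by (simp add: circle_deriv_def fun_eq_iff)

lemma circle_deriv_has_vector_derivative:
  "(circle_deriv A B C k has_vector_derivative circle_deriv A B C (Suc k) x) (at x within S)"
proof -
  have shift: "x + real (Suc k) * pi / 2 = (x + real k * pi / 2) + pi / 2"
    by (simp add: algebra_simps)
  have "((\<lambda>x. cos (x + real k * pi / 2) *\<^sub>R A + sin (x + real k * pi / 2) *\<^sub>R B + (if k = 0 then C else 0))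
     has_vector_derivative (- sin (x + real k * pi / 2) *\<^sub>R A + cos (x + real k * pi / 2) *\<^sub>R B)) (at x within S)"
    by (auto intro!: derivative_eq_intros)
  then show ?thesis
    unfolding circle_deriv_def shift by (simp add: cos_add sin_add)
qed

lemma circle_deriv_along_line:
  "((\<lambda>t. a *\<^sub>R circle_deriv A B C k (x + t *\<^sub>R v)) has_vector_derivative
     a *\<^sub>R (v *\<^sub>R circle_deriv A B C (Suc k) x)) (at 0)"
proof -
  have "((\<lambda>t. x + t *\<^sub>R v) has_vector_derivative v) (at 0)"
    by (auto intro!: derivative_eq_intros)
  from vector_diff_chain_at[OF this circle_deriv_has_vector_derivative]
  have "((\<lambda>t. circle_deriv A B C k (x + t *\<^sub>R v)) has_vector_derivative
      v *\<^sub>R circle_deriv A B C (Suc k) x) (at 0)"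
    by (simp add: o_def)
  from has_vector_derivative_scaleR[OF DERIV_const this] show ?thesis
    by simp
qed

lemma dirderivs_circle:
  "dirderivs vs (circle_deriv A B C 0) = (\<lambda>x. prod_list vs *\<^sub>R circle_deriv A B C (length vs) x)"
proof (induction vs)
  case Nil
  then show ?case by simp
next
  case (Cons v vs)
  show ?case
  proof
    fix x
    from circle_deriv_along_line[of "prod_list vs" A B C "length vs" x v] show "dirderivs (v # vs) (circle_deriv A B C 0) x
        = prod_list (v # vs) *\<^sub>R circle_deriv A B C (length (v # vs)) x"
      using Cons by (simp add: vector_derivative_at mult.commute)
  qed
qed

lemma smooth_on_circle: "open S \<Longrightarrow> smooth_on S (circle_deriv A B C 0 :: real \<Rightarrow> 'a::euclidean_space)"
  unfolding smooth_on_def dirderivs_circle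
proof (intro conjI allI ballI)
  fix vs :: "real list" and x v
  from circle_deriv_along_line[of "prod_list vs"] show "(\<lambda>t. prod_list vs *\<^sub>R circle_deriv A B C (length vs) (x + t *\<^sub>R v)) differentiable at 0"
    using differentiable_def has_vector_derivative_def by blast
  show "isCont (\<lambda>x. prod_list vs *\<^sub>R circle_deriv A B C (length vs) x) x"
    by (intro continuous_intros has_vector_derivative_continuous[OF circle_deriv_has_vector_derivative])
qed

lemma circle_smooth_curve_through:
  fixes A B C :: "'a::euclidean_space"
  assumes "\<And>s. cos s *\<^sub>R A + sin s *\<^sub>R B + C \<in> S"
  shows "smooth_curve_through S (A + C) (\<lambda>s. cos s *\<^sub>R A + sin s *\<^sub>R B + C)"
  unfolding smooth_curve_through_def
  using smooth_on_circle[of "{-1<..<1}" A B C] assms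
  by (intro conjI exI[of _ 1]) (auto simp: circle_deriv_0)

lemma circle_velocity_0:
  "vector_derivative (\<lambda>s. cos s *\<^sub>R A + sin s *\<^sub>R B + C) (at 0) = B"
  by (rule vector_derivative_at) (auto intro!: derivative_eq_intros)

lemma smooth_on_along_circle:
  fixes g :: "'a::euclidean_space \<Rightarrow> real"
  assumes "smooth_on U g" "\<And>s. cos s *\<^sub>R A + sin s *\<^sub>R B + C \<in> U"
  obtains D D2 where "\<And>s. ((\<lambda>s. g (cos s *\<^sub>R A + sin s *\<^sub>R B + C)) has_real_derivative D s) (at s)"
    and "\<And>s. (D has_real_derivative D2 s) (at s)" and "\<And>s. isCont D2 s"
proof -
  let ?c = "circle_deriv A B C"
  have "(?c 0 has_vector_derivative ?c 1 s) (at s)" "(?c 1 has_vector_derivative ?c 2 s) (at s)"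
    "isCont (?c 2) s" for s
    using circle_deriv_has_vector_derivative[of A B C _ s UNIV]
      has_vector_derivative_continuous[OF circle_deriv_has_vector_derivative]
    by (simp_all add: numeral_2_eq_2)
  moreover have "?c 0 s \<in> U" for s
    using assms(2) by (simp add: circle_deriv_0)
  ultimately show thesis
    using smooth_on_compose_C2_curve[OF assms(1), of "?c 0" "?c 1" "?c 2"] that
    unfolding circle_deriv_0 by blast
qed

lemma smooth_on_set_along_circle:
  fixes u :: "'a::euclidean_space \<Rightarrow> real"
  assumes "smooth_on_set S u" "\<And>s. cos s *\<^sub>R A + sin s *\<^sub>R B + C \<in> S"
  shows "\<exists>D D'. (\<forall>s. ((\<lambda>s. u (cos s *\<^sub>R A + sin s *\<^sub>R B + C)) has_real_derivative D s) (at s)) \<and>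
    (\<forall>s. (D has_real_derivative D' s) (at s)) \<and> (\<forall>s. isCont D' s)"
proof -
  obtain U g where "S \<subseteq> U" "smooth_on U g" and gu: "\<And>x. x \<in> S \<Longrightarrow> g x = u x"
    using assms(1) unfolding smooth_on_set_def by blast
  then have "\<And>s. cos s *\<^sub>R A + sin s *\<^sub>R B + C \<in> U"
    using assms(2) by blast
  then obtain D D' where "\<And>s. ((\<lambda>s. g (cos s *\<^sub>R A + sin s *\<^sub>R B + C)) has_real_derivative D s) (at s)"
    "\<And>s. (D has_real_derivative D' s) (at s)" "\<And>s. isCont D' s"
    using smooth_on_along_circle[OF \<open>smooth_on U g\<close>] by blast
  moreover have "(\<lambda>s. g (cos s *\<^sub>R A + sin s *\<^sub>R B + C)) = (\<lambda>s. u (cos s *\<^sub>R A + sin s *\<^sub>R B + C))"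
    using gu assms(2) by auto
  ultimately show ?thesis
    by auto
qed

lemma rotate_orthonormal:
  fixes \<gamma> X :: "'a::real_inner"
  assumes "norm \<gamma> = 1" "norm X = 1" "\<gamma> \<bullet> X = 0"
  shows "norm (cos s *\<^sub>R \<gamma> + sin s *\<^sub>R X) = 1" (is "norm ?g = 1")
    and "norm (cos s *\<^sub>R X - sin s *\<^sub>R \<gamma>) = 1" (is "norm ?x = 1")
    and "(cos s *\<^sub>R \<gamma> + sin s *\<^sub>R X) \<bullet> (cos s *\<^sub>R X - sin s *\<^sub>R \<gamma>) = 0"
proof -
  have ip: "\<gamma> \<bullet> \<gamma> = 1" "X \<bullet> X = 1" "X \<bullet> \<gamma> = 0"
    using assms by (simp_all add: power2_norm_eq_inner[symmetric] inner_commute)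
  have "norm ?g ^ 2 = cos s ^ 2 + sin s ^ 2" "norm ?x ^ 2 = cos s ^ 2 + sin s ^ 2"
    unfolding power2_norm_eq_inner
    by (simp_all add: inner_add_left inner_add_right inner_diff_left inner_diff_right ip assms(3)
        power2_eq_square)
  then show "norm ?g = 1" "norm ?x = 1"
    using norm_ge_zero[of ?g] norm_ge_zero[of ?x] by (auto simp: power2_eq_1_iff)
  show "?g \<bullet> ?x = 0"
    by (simp add: inner_add_left inner_diff_right ip assms(3) algebra_simps)
qed

lemma great_circle_has_vector_derivative:
  "((\<lambda>s. cos s *\<^sub>R \<gamma> + sin s *\<^sub>R X) has_vector_derivative cos s *\<^sub>R X - sin s *\<^sub>R \<gamma>) (at s)"
  "((\<lambda>s. cos s *\<^sub>R X - sin s *\<^sub>R \<gamma>) has_vector_derivative - \<gamma>) (at 0)"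
  by (auto intro!: derivative_eq_intros)

lemma first_factor_circle:
  fixes \<gamma> X :: "'a::euclidean_space" and \<rho> :: "'b::euclidean_space"
  assumes "norm \<gamma> = 1" "norm X = 1" "\<gamma> \<bullet> X = 0" "norm \<rho> = 1"
  shows "smooth_curve_through sphere_prod (\<gamma>, \<rho>) (\<lambda>s. (cos s *\<^sub>R \<gamma> + sin s *\<^sub>R X, \<rho>))"
    and "vector_derivative (\<lambda>s. (cos s *\<^sub>R \<gamma> + sin s *\<^sub>R X, \<rho>)) (at 0) \<noteq> 0"
proof -
  have circle: "(\<lambda>s. (cos s *\<^sub>R \<gamma> + sin s *\<^sub>R X, \<rho>)) = (\<lambda>s. cos s *\<^sub>R (\<gamma>, 0) + sin s *\<^sub>R (X, 0) + (0, \<rho>))"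
    by (simp add: fun_eq_iff)
  show "smooth_curve_through sphere_prod (\<gamma>, \<rho>) (\<lambda>s. (cos s *\<^sub>R \<gamma> + sin s *\<^sub>R X, \<rho>))"
    using circle_smooth_curve_through[of "(\<gamma>, 0)" "(X, 0)" "(0, \<rho>)" sphere_prod] assms
    by (simp add: sphere_prod_def rotate_orthonormal)
  show "vector_derivative (\<lambda>s. (cos s *\<^sub>R \<gamma> + sin s *\<^sub>R X, \<rho>)) (at 0) \<noteq> 0"
    using assms(2) unfolding circle circle_velocity_0 by (auto simp: zero_prod_def)
qed

lemma second_factor_circle:
  fixes \<gamma> :: "'a::euclidean_space" and \<rho> Y :: "'b::euclidean_space"
  assumes "norm \<gamma> = 1" "norm \<rho> = 1" "norm Y = 1" "\<rho> \<bullet> Y = 0"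
  shows "smooth_curve_through sphere_prod (\<gamma>, \<rho>) (\<lambda>s. (\<gamma>, cos s *\<^sub>R \<rho> + sin s *\<^sub>R Y))"
    and "vector_derivative (\<lambda>s. (\<gamma>, cos s *\<^sub>R \<rho> + sin s *\<^sub>R Y)) (at 0) \<noteq> 0"
proof -
  have circle: "(\<lambda>s. (\<gamma>, cos s *\<^sub>R \<rho> + sin s *\<^sub>R Y)) = (\<lambda>s. cos s *\<^sub>R (0, \<rho>) + sin s *\<^sub>R (0, Y) + (\<gamma>, 0))"
    by (simp add: fun_eq_iff)
  show "smooth_curve_through sphere_prod (\<gamma>, \<rho>) (\<lambda>s. (\<gamma>, cos s *\<^sub>R \<rho> + sin s *\<^sub>R Y))"
    using circle_smooth_curve_through[of "(0, \<rho>)" "(0, Y)" "(\<gamma>, 0)" sphere_prod] assms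
    by (simp add: sphere_prod_def rotate_orthonormal)
  show "vector_derivative (\<lambda>s. (\<gamma>, cos s *\<^sub>R \<rho> + sin s *\<^sub>R Y)) (at 0) \<noteq> 0"
    using assms(3) unfolding circle circle_velocity_0 by (auto simp: zero_prod_def)
qed

text \<open>\<open>xsin y\<close> and \<open>xcos y\<close> are the sine and cosine of \<open>arctan (exp y)\<close>; they are the two
  coefficients of \<open>Xmap\<close>.\<close>

definition xsin :: "real \<Rightarrow> real" where "xsin y = exp y / sqrt (1 + exp (2 * y))"

definition xcos :: "real \<Rightarrow> real" where "xcos y = 1 / sqrt (1 + exp (2 * y))"

lemma xsin_pos: "xsin y > 0"
  by (simp add: xsin_def add_pos_pos)

lemma xcos_pos: "xcos y > 0"
  by (simp add: xcos_def add_pos_pos)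

lemma sqrt_one_plus_exp_double:
  "sqrt (1 + exp (2 * y)) > 0" "sqrt (1 + exp (2 * y)) ^ 2 = 1 + exp y ^ 2"
  by (simp_all add: add_pos_pos less_imp_le flip: exp_double)

lemma xsin_xcos_sq: "xsin y ^ 2 + xcos y ^ 2 = 1"
  using sqrt_one_plus_exp_double[of y]
  by (simp add: xsin_def xcos_def power_divide add_divide_distrib[symmetric] add.commute)

lemma Xmap_eq_xsin_xcos: "Xmap u p = (xsin (u p) *\<^sub>R fst p, xcos (u p) *\<^sub>R snd p)"
proof -
  have "1 + exp (2 * y) = exp y ^ 2 * (1 + exp (-2 * y))" for y :: real
    by (simp add: distrib_left flip: exp_double exp_add)
  then have "sqrt (1 + exp (2 * y)) = exp y * sqrt (1 + exp (-2 * y))" for y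
    by (simp add: real_sqrt_mult)
  then have "(1 + exp (-2 * y)) powr (-1/2) = xsin y" "(1 + exp (2 * y)) powr (-1/2) = xcos y" for y
    by (simp_all add: xsin_def xcos_def powr_minus_divide powr_half_sqrt add_pos_pos)
  then show ?thesis by (simp add: Xmap_def)
qed

lemma sqrt_one_plus_exp_double_has_real_derivative:
  "((\<lambda>y. sqrt (1 + exp (2 * y))) has_real_derivative exp (2 * y) / sqrt (1 + exp (2 * y))) (at y)"
proof -
  have pos: "1 + exp (2 * y) > 0" by (simp add: add_pos_pos)
  have "((\<lambda>y. 1 + exp (2 * y)) has_real_derivative exp (2 * y) * 2) (at y)"
    by (auto intro!: derivative_eq_intros)
  from DERIV_chain2[OF DERIV_real_sqrt[OF pos] this] show ?thesis
    by (rule DERIV_cong) (simp add: inverse_eq_divide)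
qed

lemma xsin_has_real_derivative: "(xsin has_real_derivative xsin y * xcos y ^ 2) (at y)"
proof -
  define R where "R = sqrt (1 + exp (2 * y))"
  have E: "exp (2 * y) = exp y * exp y"
    by (metis exp_add mult_2)
  have R: "R > 0" "R * R = 1 + exp y * exp y"
    unfolding R_def E by (simp_all add: add_pos_pos less_imp_le)
  have "(xsin has_real_derivative (exp y * R - exp y * (exp (2 * y) / R)) / (R * R)) (at y)"
    unfolding xsin_def[abs_def] R_def
    by (intro DERIV_divide DERIV_exp sqrt_one_plus_exp_double_has_real_derivative)
      (use R(1) in \<open>simp add: R_def\<close>)
  moreover have "(exp y * R - exp y * (exp y * exp y / R)) / (R * R)
      = exp y * (R * R - exp y * exp y) / (R * R * R)"
    using R(1) by (simp add: field_simps)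
  moreover have "\<dots> = xsin y * xcos y ^ 2"
    using R unfolding xsin_def xcos_def R_def[symmetric] by (simp add: power2_eq_square)
  ultimately show ?thesis
    unfolding E by simp
qed

lemma xcos_has_real_derivative: "(xcos has_real_derivative - (xcos y * xsin y ^ 2)) (at y)"
proof -
  define R where "R = sqrt (1 + exp (2 * y))"
  have E: "exp (2 * y) = exp y * exp y"
    by (metis exp_add mult_2)
  have R: "R > 0" "R * R = 1 + exp y * exp y"
    unfolding R_def E by (simp_all add: add_pos_pos less_imp_le)
  have "(xcos has_real_derivative (0 * R - 1 * (exp (2 * y) / R)) / (R * R)) (at y)"
    unfolding xcos_def[abs_def] R_def
    by (intro DERIV_divide DERIV_const sqrt_one_plus_exp_double_has_real_derivative)
      (use R(1) in \<open>simp add: R_def\<close>)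
  moreover have "(0 * R - 1 * (exp y * exp y / R)) / (R * R) = - (xcos y * xsin y ^ 2)"
    using R unfolding xsin_def xcos_def R_def[symmetric] by (simp add: field_simps power2_eq_square)
  ultimately show ?thesis
    unfolding E by simp
qed

lemma xsin_xcos_compose_derivatives:
  assumes w: "\<And>s. (w has_real_derivative D s) (at s)" and D: "(D has_real_derivative D') (at 0)"
  shows "((\<lambda>s. xsin (w s)) has_real_derivative xsin (w s) * xcos (w s) ^ 2 * D s) (at s)"
    and "((\<lambda>s. xcos (w s)) has_real_derivative - xcos (w s) * xsin (w s) ^ 2 * D s) (at s)"
    and "((\<lambda>s. xsin (w s) * xcos (w s) ^ 2 * D s) has_real_derivative
           xsin (w 0) * xcos (w 0) ^ 2 * (D' + (xcos (w 0) ^ 2 - 2 * xsin (w 0) ^ 2) * D 0 ^ 2)) (at 0)"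
    and "((\<lambda>s. - xcos (w s) * xsin (w s) ^ 2 * D s) has_real_derivative
           - xcos (w 0) * xsin (w 0) ^ 2 * (D' + (2 * xcos (w 0) ^ 2 - xsin (w 0) ^ 2) * D 0 ^ 2)) (at 0)"
proof -
  show sin': "((\<lambda>s. xsin (w s)) has_real_derivative xsin (w s) * xcos (w s) ^ 2 * D s) (at s)" for s
    using DERIV_chain2[OF xsin_has_real_derivative w] .
  show cos': "((\<lambda>s. xcos (w s)) has_real_derivative - xcos (w s) * xsin (w s) ^ 2 * D s) (at s)" for s
    using DERIV_chain2[OF xcos_has_real_derivative w] by simp
  show "((\<lambda>s. xsin (w s) * xcos (w s) ^ 2 * D s) has_real_derivative
      xsin (w 0) * xcos (w 0) ^ 2 * (D' + (xcos (w 0) ^ 2 - 2 * xsin (w 0) ^ 2) * D 0 ^ 2)) (at 0)"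
    by (rule DERIV_cong[OF DERIV_mult[OF DERIV_mult[OF sin' DERIV_power[OF cos']] D]])
      (simp add: power2_eq_square algebra_simps)
  show "((\<lambda>s. - xcos (w s) * xsin (w s) ^ 2 * D s) has_real_derivative
      - xcos (w 0) * xsin (w 0) ^ 2 * (D' + (2 * xcos (w 0) ^ 2 - xsin (w 0) ^ 2) * D 0 ^ 2)) (at 0)"
    by (rule DERIV_cong[OF DERIV_mult[OF DERIV_mult[OF DERIV_minus[OF cos'] DERIV_power[OF sin']] D]])
      (simp add: power2_eq_square algebra_simps)
qed

lemma Xmap_curve_derivatives:
  fixes a :: "real \<Rightarrow> 'a::real_normed_vector" and b :: "real \<Rightarrow> 'b::real_normed_vector"
  assumes w: "\<And>s. (w has_real_derivative D s) (at s)" "(D has_real_derivative D') (at 0)"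
    and a: "\<And>s. (a has_vector_derivative a' s) (at s)" "(a' has_vector_derivative a'') (at 0)"
    and b: "\<And>s. (b has_vector_derivative b' s) (at s)" "(b' has_vector_derivative b'') (at 0)"
  defines "G \<equiv> \<lambda>s. (xsin (w s) *\<^sub>R a' s + (xsin (w s) * xcos (w s) ^ 2 * D s) *\<^sub>R a s,
      xcos (w s) *\<^sub>R b' s + (- xcos (w s) * xsin (w s) ^ 2 * D s) *\<^sub>R b s)"
    and "P \<equiv> xsin (w 0)" and "Q \<equiv> xcos (w 0)"
  shows "((\<lambda>s. (xsin (w s) *\<^sub>R a s, xcos (w s) *\<^sub>R b s)) has_vector_derivative G s) (at s)"
    and "(G has_vector_derivative
      (P *\<^sub>R a'' + (2 * P * Q ^ 2 * D 0) *\<^sub>R a' 0 + (P * Q ^ 2 * (D' + (Q ^ 2 - 2 * P ^ 2) * D 0 ^ 2)) *\<^sub>R a 0,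
       Q *\<^sub>R b'' - (2 * Q * P ^ 2 * D 0) *\<^sub>R b' 0 - (Q * P ^ 2 * (D' + (2 * Q ^ 2 - P ^ 2) * D 0 ^ 2)) *\<^sub>R b 0))
      (at 0)"
proof -
  note derivs = xsin_xcos_compose_derivatives[OF w]
  show "((\<lambda>s. (xsin (w s) *\<^sub>R a s, xcos (w s) *\<^sub>R b s)) has_vector_derivative G s) (at s)"
    unfolding G_def by (intro has_vector_derivative_Pair has_vector_derivative_scaleR derivs(1,2) a(1) b(1))
  have "(G has_vector_derivative
      (P *\<^sub>R a'' + (P * Q ^ 2 * D 0) *\<^sub>R a' 0
         + ((P * Q ^ 2 * D 0) *\<^sub>R a' 0 + (P * Q ^ 2 * (D' + (Q ^ 2 - 2 * P ^ 2) * D 0 ^ 2)) *\<^sub>R a 0),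
       Q *\<^sub>R b'' + (- Q * P ^ 2 * D 0) *\<^sub>R b' 0
         + ((- Q * P ^ 2 * D 0) *\<^sub>R b' 0 + (- Q * P ^ 2 * (D' + (2 * Q ^ 2 - P ^ 2) * D 0 ^ 2)) *\<^sub>R b 0)))
      (at 0)"
    unfolding G_def P_def Q_def
    by (intro has_vector_derivative_Pair has_vector_derivative_add has_vector_derivative_scaleR
        derivs a b)
  then show "(G has_vector_derivative
      (P *\<^sub>R a'' + (2 * P * Q ^ 2 * D 0) *\<^sub>R a' 0 + (P * Q ^ 2 * (D' + (Q ^ 2 - 2 * P ^ 2) * D 0 ^ 2)) *\<^sub>R a 0,
       Q *\<^sub>R b'' - (2 * Q * P ^ 2 * D 0) *\<^sub>R b' 0 - (Q * P ^ 2 * (D' + (2 * Q ^ 2 - P ^ 2) * D 0 ^ 2)) *\<^sub>R b 0))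
      (at 0)"
    by (rule has_vector_derivative_eq_rhs) (simp add: algebra_simps scaleR_2 flip: scaleR_scaleR)
qed

definition convexity_normal :: "'a::euclidean_space set \<Rightarrow> ('a \<Rightarrow> 'a) \<Rightarrow> 'a \<Rightarrow> 'a \<Rightarrow> bool" where
  "convexity_normal M F p \<nu> \<longleftrightarrow> \<nu> \<bullet> F p = 0 \<and>
     (\<forall>c. smooth_curve_through M p c \<longrightarrow> \<nu> \<bullet> vector_derivative (F \<circ> c) (at 0) = 0) \<and>
     (\<forall>c. smooth_curve_through M p c \<and> vector_derivative c (at 0) \<noteq> 0 \<longrightarrow>
        \<nu> \<bullet> vector_derivative (\<lambda>t. vector_derivative (F \<circ> c) (at t)) (at 0) > 0)"

lemma strictly_convex_hypersurface_convexity_normal: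
  "strictly_convex_hypersurface M F \<Longrightarrow> p \<in> M \<Longrightarrow> \<exists>\<nu>. convexity_normal M F p \<nu>"
  unfolding strictly_convex_hypersurface_def convexity_normal_def by blast

lemma convexity_normal_tangent:
  assumes "convexity_normal M F p \<nu>" "smooth_curve_through M p c"
    and "\<And>s. ((F \<circ> c) has_vector_derivative G s) (at s)"
  shows "\<nu> \<bullet> G 0 = 0"
  using assms vector_derivative_at[OF assms(3)] unfolding convexity_normal_def by metis

lemma convexity_normal_curvature:
  assumes "convexity_normal M F p \<nu>" "smooth_curve_through M p c" "vector_derivative c (at 0) \<noteq> 0"
    and "\<And>s. ((F \<circ> c) has_vector_derivative G s) (at s)" "(G has_vector_derivative V) (at 0)"
  shows "\<nu> \<bullet> V > 0"
proof -
  have "(\<lambda>t. vector_derivative (F \<circ> c) (at t)) = G"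
    using vector_derivative_at[OF assms(4)] by blast
  then show ?thesis
    using assms(1-3) vector_derivative_at[OF assms(5)] unfolding convexity_normal_def by metis
qed

text \<open>In both identities the normal condition forces \<open>(n1, n3) = k (-Q, P)\<close> with
  \<open>k = P n3 - Q n1\<close>, and the tangency condition then determines the remaining component.\<close>

lemma first_circle_curvature_identity:
  fixes P Q a a' n1 n2 n3 :: real
  assumes "P\<^sup>2 + Q\<^sup>2 = 1" "P \<noteq> 0" "P * n1 + Q * n3 = 0"
    and "P * Q\<^sup>2 * a * n1 + P * n2 - Q * P\<^sup>2 * a * n3 = 0"
  shows "(P * Q\<^sup>2 * (a' + (Q\<^sup>2 - 2 * P\<^sup>2) * a\<^sup>2) - P) * n1 + 2 * (P * Q\<^sup>2 * a) * n2
      - Q * P\<^sup>2 * (a' + (2 * Q\<^sup>2 - P\<^sup>2) * a\<^sup>2) * n3 = (P * n3 - Q * n1) * P * Q * (1 - a' + a\<^sup>2)"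
proof -
  have "P * ((P * Q\<^sup>2 * (a' + (Q\<^sup>2 - 2 * P\<^sup>2) * a\<^sup>2) - P) * n1 + 2 * (P * Q\<^sup>2 * a) * n2
      - Q * P\<^sup>2 * (a' + (2 * Q\<^sup>2 - P\<^sup>2) * a\<^sup>2) * n3) = P * ((P * n3 - Q * n1) * P * Q * (1 - a' + a\<^sup>2))"
    using assms(1,3,4) by algebra
  then show ?thesis using assms(2) by simp
qed

lemma second_circle_curvature_identity:
  fixes P Q b b' n1 n3 n4 :: real
  assumes "P\<^sup>2 + Q\<^sup>2 = 1" "Q \<noteq> 0" "P * n1 + Q * n3 = 0"
    and "P * Q\<^sup>2 * b * n1 - Q * P\<^sup>2 * b * n3 + Q * n4 = 0"
  shows "P * Q\<^sup>2 * (b' + (Q\<^sup>2 - 2 * P\<^sup>2) * b\<^sup>2) * n1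
      + (- Q * P\<^sup>2 * (b' + (2 * Q\<^sup>2 - P\<^sup>2) * b\<^sup>2) - Q) * n3 + 2 * (- Q * P\<^sup>2 * b) * n4
      = - (P * n3 - Q * n1) * P * Q * (1 + b' + b\<^sup>2)"
proof -
  have "Q * (P * Q\<^sup>2 * (b' + (Q\<^sup>2 - 2 * P\<^sup>2) * b\<^sup>2) * n1
      + (- Q * P\<^sup>2 * (b' + (2 * Q\<^sup>2 - P\<^sup>2) * b\<^sup>2) - Q) * n3 + 2 * (- Q * P\<^sup>2 * b) * n4)
      = Q * (- (P * n3 - Q * n1) * P * Q * (1 + b' + b\<^sup>2))"
    using assms(1,3,4) by algebra
  then show ?thesis using assms(2) by simp
qed

lemma first_circle_curvature_sign:
  fixes u :: "'a::euclidean_space \<times> 'b::euclidean_space \<Rightarrow> real" and \<gamma> X :: 'a and \<rho> :: 'b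
  assumes \<nu>: "convexity_normal sphere_prod (Xmap u) (\<gamma>, \<rho>) (\<nu>1, \<nu>2)"
    and \<gamma>X: "norm \<gamma> = 1" "norm X = 1" "\<gamma> \<bullet> X = 0" and \<rho>: "norm \<rho> = 1"
    and w: "\<And>s. w s = u (cos s *\<^sub>R \<gamma> + sin s *\<^sub>R X, \<rho>)"
    and dw: "\<And>s. (w has_real_derivative D s) (at s)" and dD: "(D has_real_derivative D') (at 0)"
  shows "0 < (xsin (w 0) * (\<nu>2 \<bullet> \<rho>) - xcos (w 0) * (\<nu>1 \<bullet> \<gamma>)) * (1 - D' + (D 0)\<^sup>2)"
proof -
  define P Q a where "P = xsin (w 0)" and "Q = xcos (w 0)" and "a = D 0"
  have PQ: "P\<^sup>2 + Q\<^sup>2 = 1" "P > 0" "Q > 0"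
    by (simp_all add: P_def Q_def xsin_xcos_sq xsin_pos xcos_pos)
  have "Xmap u \<circ> (\<lambda>s. (cos s *\<^sub>R \<gamma> + sin s *\<^sub>R X, \<rho>))
      = (\<lambda>s. (xsin (w s) *\<^sub>R (cos s *\<^sub>R \<gamma> + sin s *\<^sub>R X), xcos (w s) *\<^sub>R \<rho>))"
    by (simp add: fun_eq_iff Xmap_eq_xsin_xcos w)
  note derivs = Xmap_curve_derivatives[where a="\<lambda>s. cos s *\<^sub>R \<gamma> + sin s *\<^sub>R X" and b="\<lambda>s. \<rho>",
      OF dw dD great_circle_has_vector_derivative has_vector_derivative_const has_vector_derivative_const,
      folded this]
  note curve = first_factor_circle[OF \<gamma>X \<rho>]
  have normal: "P * (\<nu>1 \<bullet> \<gamma>) + Q * (\<nu>2 \<bullet> \<rho>) = 0"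
    using \<nu> w[of 0] by (simp add: convexity_normal_def Xmap_eq_xsin_xcos P_def Q_def)
  have tangent: "P * Q\<^sup>2 * a * (\<nu>1 \<bullet> \<gamma>) + P * (\<nu>1 \<bullet> X) - Q * P\<^sup>2 * a * (\<nu>2 \<bullet> \<rho>) = 0"
    using convexity_normal_tangent[OF \<nu> curve(1) derivs(1)]
    by (simp add: P_def Q_def a_def inner_add_right algebra_simps)
  have "0 < (P * Q\<^sup>2 * (D' + (Q\<^sup>2 - 2 * P\<^sup>2) * a\<^sup>2) - P) * (\<nu>1 \<bullet> \<gamma>)
      + 2 * (P * Q\<^sup>2 * a) * (\<nu>1 \<bullet> X) - Q * P\<^sup>2 * (D' + (2 * Q\<^sup>2 - P\<^sup>2) * a\<^sup>2) * (\<nu>2 \<bullet> \<rho>)"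
    using convexity_normal_curvature[OF \<nu> curve derivs]
    by (simp add: P_def Q_def a_def inner_add_right inner_diff_right algebra_simps)
  also have "\<dots> = (P * (\<nu>2 \<bullet> \<rho>) - Q * (\<nu>1 \<bullet> \<gamma>)) * P * Q * (1 - D' + a\<^sup>2)"
    using PQ(2) by (intro first_circle_curvature_identity[OF PQ(1) _ normal tangent]) simp
  finally show ?thesis
    using zero_less_mult_pos2[of "(P * (\<nu>2 \<bullet> \<rho>) - Q * (\<nu>1 \<bullet> \<gamma>)) * (1 - D' + a\<^sup>2)" "P * Q"] PQ(2,3)
    by (simp add: P_def Q_def a_def mult_ac)
qed

lemma second_circle_curvature_sign:
  fixes u :: "'a::euclidean_space \<times> 'b::euclidean_space \<Rightarrow> real" and \<gamma> :: 'a and \<rho> Y :: 'b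
  assumes \<nu>: "convexity_normal sphere_prod (Xmap u) (\<gamma>, \<rho>) (\<nu>1, \<nu>2)"
    and \<gamma>: "norm \<gamma> = 1" and \<rho>Y: "norm \<rho> = 1" "norm Y = 1" "\<rho> \<bullet> Y = 0"
    and w: "\<And>s. w s = u (\<gamma>, cos s *\<^sub>R \<rho> + sin s *\<^sub>R Y)"
    and dw: "\<And>s. (w has_real_derivative D s) (at s)" and dD: "(D has_real_derivative D') (at 0)"
  shows "0 < - (xsin (w 0) * (\<nu>2 \<bullet> \<rho>) - xcos (w 0) * (\<nu>1 \<bullet> \<gamma>)) * (1 + D' + (D 0)\<^sup>2)"
proof -
  define P Q b where "P = xsin (w 0)" and "Q = xcos (w 0)" and "b = D 0"
  have PQ: "P\<^sup>2 + Q\<^sup>2 = 1" "P > 0" "Q > 0"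
    by (simp_all add: P_def Q_def xsin_xcos_sq xsin_pos xcos_pos)
  have "Xmap u \<circ> (\<lambda>s. (\<gamma>, cos s *\<^sub>R \<rho> + sin s *\<^sub>R Y))
      = (\<lambda>s. (xsin (w s) *\<^sub>R \<gamma>, xcos (w s) *\<^sub>R (cos s *\<^sub>R \<rho> + sin s *\<^sub>R Y)))"
    by (simp add: fun_eq_iff Xmap_eq_xsin_xcos w)
  note derivs = Xmap_curve_derivatives[where a="\<lambda>s. \<gamma>" and b="\<lambda>s. cos s *\<^sub>R \<rho> + sin s *\<^sub>R Y",
      OF dw dD has_vector_derivative_const has_vector_derivative_const great_circle_has_vector_derivative,
      folded this]
  note curve = second_factor_circle[OF \<gamma> \<rho>Y]
  have normal: "P * (\<nu>1 \<bullet> \<gamma>) + Q * (\<nu>2 \<bullet> \<rho>) = 0"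
    using \<nu> w[of 0] by (simp add: convexity_normal_def Xmap_eq_xsin_xcos P_def Q_def)
  have tangent: "P * Q\<^sup>2 * b * (\<nu>1 \<bullet> \<gamma>) - Q * P\<^sup>2 * b * (\<nu>2 \<bullet> \<rho>) + Q * (\<nu>2 \<bullet> Y) = 0"
    using convexity_normal_tangent[OF \<nu> curve(1) derivs(1)]
    by (simp add: P_def Q_def b_def inner_add_right algebra_simps)
  have "0 < P * Q\<^sup>2 * (D' + (Q\<^sup>2 - 2 * P\<^sup>2) * b\<^sup>2) * (\<nu>1 \<bullet> \<gamma>)
      + (- Q * P\<^sup>2 * (D' + (2 * Q\<^sup>2 - P\<^sup>2) * b\<^sup>2) - Q) * (\<nu>2 \<bullet> \<rho>) + 2 * (- Q * P\<^sup>2 * b) * (\<nu>2 \<bullet> Y)"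
    using convexity_normal_curvature[OF \<nu> curve derivs]
    by (simp add: P_def Q_def b_def inner_add_right inner_diff_right algebra_simps)
  also have "\<dots> = - (P * (\<nu>2 \<bullet> \<rho>) - Q * (\<nu>1 \<bullet> \<gamma>)) * P * Q * (1 + D' + b\<^sup>2)"
    using PQ(3) by (intro second_circle_curvature_identity[OF PQ(1) _ normal tangent]) simp
  finally show ?thesis
    using zero_less_mult_pos2[of "- (P * (\<nu>2 \<bullet> \<rho>) - Q * (\<nu>1 \<bullet> \<gamma>)) * (1 + D' + b\<^sup>2)" "P * Q"] PQ(2,3)
    by (simp add: P_def Q_def b_def mult_ac)
qed

lemma great_circle_curvatures_opposite:
  fixes u :: "'a::euclidean_space \<times> 'b::euclidean_space \<Rightarrow> real" and \<gamma> X :: 'a and \<rho> Y :: 'b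
  assumes "strictly_convex_hypersurface sphere_prod (Xmap u)"
    and \<gamma>X: "norm \<gamma> = 1" "norm X = 1" "\<gamma> \<bullet> X = 0" and \<rho>Y: "norm \<rho> = 1" "norm Y = 1" "\<rho> \<bullet> Y = 0"
    and w1: "\<And>s. w1 s = u (cos s *\<^sub>R \<gamma> + sin s *\<^sub>R X, \<rho>)"
    and "\<And>s. (w1 has_real_derivative D1 s) (at s)" "(D1 has_real_derivative D1') (at 0)"
    and w2: "\<And>s. w2 s = u (\<gamma>, cos s *\<^sub>R \<rho> + sin s *\<^sub>R Y)"
    and "\<And>s. (w2 has_real_derivative D2 s) (at s)" "(D2 has_real_derivative D2') (at 0)"
  shows "(1 - D1' + (D1 0)\<^sup>2) * (1 + D2' + (D2 0)\<^sup>2) < 0"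
proof -
  have "(\<gamma>, \<rho>) \<in> sphere_prod"
    by (simp add: sphere_prod_def \<gamma>X \<rho>Y)
  then obtain \<nu>1 \<nu>2 where \<nu>: "convexity_normal sphere_prod (Xmap u) (\<gamma>, \<rho>) (\<nu>1, \<nu>2)"
    using strictly_convex_hypersurface_convexity_normal[OF assms(1)] by fastforce
  define k where "k = xsin (u (\<gamma>, \<rho>)) * (\<nu>2 \<bullet> \<rho>) - xcos (u (\<gamma>, \<rho>)) * (\<nu>1 \<bullet> \<gamma>)"
  define f h where "f = 1 - D1' + (D1 0)\<^sup>2" and "h = 1 + D2' + (D2 0)\<^sup>2"
  have "0 < k * f"
    using first_circle_curvature_sign[OF \<nu> \<gamma>X \<rho>Y(1) w1 assms(9,10)] w1[of 0] by (simp add: k_def f_def)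
  moreover have "0 < - k * h"
    using second_circle_curvature_sign[OF \<nu> \<gamma>X(1) \<rho>Y w2 assms(12,13)] w2[of 0] by (simp add: k_def h_def)
  ultimately have "0 < (k * f) * (- k * h)"
    by (rule mult_pos_pos)
  also have "\<dots> = - (k * k) * (f * h)"
    by (simp add: algebra_simps)
  finally show ?thesis
    using zero_le_square[of k] by (auto simp: zero_less_mult_iff mult_less_0_iff
        f_def[symmetric] h_def[symmetric])
qed

lemma torus_curvatures_opposite:
  fixes u :: "'a::euclidean_space \<times> 'b::euclidean_space \<Rightarrow> real" and \<gamma> X :: 'a and \<rho> Y :: 'b
  assumes convex: "strictly_convex_hypersurface sphere_prod (Xmap u)"
    and \<gamma>X: "norm \<gamma> = 1" "norm X = 1" "\<gamma> \<bullet> X = 0" and \<rho>Y: "norm \<rho> = 1" "norm Y = 1" "\<rho> \<bullet> Y = 0"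
    and D: "\<And>\<sigma>. ((\<lambda>\<sigma>. u (cos \<sigma> *\<^sub>R \<gamma> + sin \<sigma> *\<^sub>R X, cos t *\<^sub>R \<rho> + sin t *\<^sub>R Y))
        has_real_derivative D \<sigma>) (at \<sigma>)" "\<And>\<sigma>. (D has_real_derivative D' \<sigma>) (at \<sigma>)"
    and E: "\<And>\<tau>. ((\<lambda>\<tau>. u (cos s *\<^sub>R \<gamma> + sin s *\<^sub>R X, cos \<tau> *\<^sub>R \<rho> + sin \<tau> *\<^sub>R Y))
        has_real_derivative E \<tau>) (at \<tau>)" "\<And>\<tau>. (E has_real_derivative E' \<tau>) (at \<tau>)"
  shows "(1 - D' s + (D s)\<^sup>2) * (1 + E' t + (E t)\<^sup>2) < 0"
proof -
  define gam Xs where "gam s = cos s *\<^sub>R \<gamma> + sin s *\<^sub>R X" and "Xs s = cos s *\<^sub>R X - sin s *\<^sub>R \<gamma>" for s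
  define rh Yt where "rh t = cos t *\<^sub>R \<rho> + sin t *\<^sub>R Y" and "Yt t = cos t *\<^sub>R Y - sin t *\<^sub>R \<rho>" for t
  have "cos \<sigma> *\<^sub>R gam s + sin \<sigma> *\<^sub>R Xs s = gam (\<sigma> + s)"
    "cos \<sigma> *\<^sub>R rh t + sin \<sigma> *\<^sub>R Yt t = rh (\<sigma> + t)" for s t \<sigma>
    by (simp_all add: gam_def Xs_def rh_def Yt_def cos_add sin_add algebra_simps)
  moreover have "((\<lambda>\<sigma>. u (gam (\<sigma> + s), rh t)) has_real_derivative D (\<sigma> + s)) (at \<sigma>)"
    "((\<lambda>\<sigma>. u (gam s, rh (\<sigma> + t))) has_real_derivative E (\<sigma> + t)) (at \<sigma>)" for \<sigma>
    using D(1)[of "\<sigma> + s"] E(1)[of "\<sigma> + t"] by (simp_all add: DERIV_shift gam_def rh_def)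
  moreover have "((\<lambda>\<sigma>. D (\<sigma> + s)) has_real_derivative D' s) (at 0)"
    "((\<lambda>\<sigma>. E (\<sigma> + t)) has_real_derivative E' t) (at 0)"
    using D(2)[of s] E(2)[of t] DERIV_shift[of D "D' s" 0 s] DERIV_shift[of E "E' t" 0 t]
    by simp_all
  ultimately show ?thesis
    using great_circle_curvatures_opposite[OF convex rotate_orthonormal[OF \<gamma>X, of s, folded gam_def Xs_def]
        rotate_orthonormal[OF \<rho>Y, of t, folded rh_def Yt_def],
        of "\<lambda>\<sigma>. u (gam (\<sigma> + s), rh t)" "\<lambda>\<sigma>. D (\<sigma> + s)" "D' s"
        "\<lambda>\<sigma>. u (gam s, rh (\<sigma> + t))" "\<lambda>\<sigma>. E (\<sigma> + t)" "E' t"]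
    by simp
qed

lemma not_strictly_convex_Xmap:
  fixes u :: "'a::euclidean_space \<times> 'b::euclidean_space \<Rightarrow> real" and \<gamma> X :: 'a and \<rho> Y :: 'b
  assumes \<gamma>X: "norm \<gamma> = 1" "norm X = 1" "\<gamma> \<bullet> X = 0" and \<rho>Y: "norm \<rho> = 1" "norm Y = 1" "\<rho> \<bullet> Y = 0"
    and u: "smooth_on_set sphere_prod u"
  shows "\<not> strictly_convex_hypersurface sphere_prod (Xmap u)"
proof
  assume convex: "strictly_convex_hypersurface sphere_prod (Xmap u)"
  define gam rh where "gam s = cos s *\<^sub>R \<gamma> + sin s *\<^sub>R X" and "rh t = cos t *\<^sub>R \<rho> + sin t *\<^sub>R Y" for s t
  note opposite = torus_curvatures_opposite[OF convex \<gamma>X \<rho>Y, folded gam_def rh_def]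
  have on_torus: "(gam s, rh t) \<in> sphere_prod" for s t
    by (simp add: sphere_prod_def gam_def rh_def rotate_orthonormal \<gamma>X \<rho>Y)
  have along_gam: "\<exists>D D'. (\<forall>s. ((\<lambda>s. u (gam s, rh t)) has_real_derivative D s) (at s)) \<and>
      (\<forall>s. (D has_real_derivative D' s) (at s)) \<and> (\<forall>s. isCont D' s)" for t
    using smooth_on_set_along_circle[OF u, of "(\<gamma>, 0)" "(X, 0)" "(0, rh t)"] on_torus
    by (simp add: gam_def)
  obtain DS DS' where DS: "\<And>s. ((\<lambda>s. u (gam s, rh 0)) has_real_derivative DS s) (at s)"
      "\<And>s. (DS has_real_derivative DS' s) (at s)"
    using along_gam[of 0] by blast
  obtain s0 where "DS s0 = 0" "DS' s0 \<le> 0"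
    using periodic_max_second_derivative[OF DS, of "2 * pi"] by (auto simp: gam_def)
  obtain DT DT' where DT: "\<And>t. ((\<lambda>t. u (gam s0, rh t)) has_real_derivative DT t) (at t)"
      "\<And>t. (DT has_real_derivative DT' t) (at t)" and "\<And>t. isCont DT' t"
    using smooth_on_set_along_circle[OF u, of "(0, \<rho>)" "(0, Y)" "(gam s0, 0)"] on_torus
    by (auto simp: rh_def)
  define h where "h t = 1 + DT' t + (DT t)\<^sup>2" for t
  have "isCont h t" for t
    unfolding h_def using DERIV_isCont[OF DT(2)] \<open>\<And>t. isCont DT' t\<close>
    by (intro continuous_intros)
  then have "continuous_on UNIV h"
    by (simp add: continuous_at_imp_continuous_on)
  have "h 0 < 0"
    using opposite[OF DS DT] \<open>DS s0 = 0\<close> \<open>DS' s0 \<le> 0\<close> by (simp add: h_def mult_less_0_iff)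
  moreover obtain t1 where "DT t1 = 0" "DT' t1 \<ge> 0"
    using periodic_min_second_derivative[OF DT(1,2), of "2 * pi"] by (auto simp: rh_def)
  then have "h t1 > 0"
    by (simp add: h_def)
  ultimately obtain t0 where "h t0 = 0"
    using connectedD_interval[OF connected_continuous_image[OF \<open>continuous_on UNIV h\<close> connected_UNIV],
        of "h 0" "h t1" 0] by force
  moreover obtain D D' where "\<And>s. ((\<lambda>s. u (gam s, rh t0)) has_real_derivative D s) (at s)"
      "\<And>s. (D has_real_derivative D' s) (at s)"
    using along_gam[of t0] by blast
  note opposite[OF this DT]
  ultimately show False
    by (simp add: h_def)
qed

lemma exists_orthonormal_pair:
  assumes "DIM('a) \<ge> 2"
  obtains \<gamma> X :: "'a::euclidean_space" where "norm \<gamma> = 1" "norm X = 1" "\<gamma> \<bullet> X = 0"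
proof -
  have "\<not> card (Basis :: 'a set) \<le> Suc 0"
    using assms by simp
  then obtain b1 b2 :: 'a where "b1 \<in> Basis" "b2 \<in> Basis" "b1 \<noteq> b2"
    by (auto simp: card_le_Suc0_iff_eq)
  then show thesis
    by (intro that[of b1 b2]) (simp_all add: inner_not_same_Basis)
qed

theorem proposition2p1:
  fixes u :: "(real ^ 'm) \<times> (real ^ 'n) \<Rightarrow> real"
  assumes "CARD('m) \<ge> 2" and "CARD('n) \<ge> 2"
    and "smooth_on_set (sphere_prod :: ((real ^ 'm) \<times> (real ^ 'n)) set) u"
  shows "\<not> strictly_convex_hypersurface (sphere_prod :: ((real ^ 'm) \<times> (real ^ 'n)) set) (Xmap u)"
proof -
  obtain \<gamma> X :: "real ^ 'm" where "norm \<gamma> = 1" "norm X = 1" "\<gamma> \<bullet> X = 0"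
    using exists_orthonormal_pair[where 'a="real ^ 'm"] assms(1) by auto
  moreover obtain \<rho> Y :: "real ^ 'n" where "norm \<rho> = 1" "norm Y = 1" "\<rho> \<bullet> Y = 0"
    using exists_orthonormal_pair[where 'a="real ^ 'n"] assms(2) by auto
  ultimately show ?thesis
    using not_strictly_convex_Xmap assms(3) by blast
qed

end
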